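(* Every compact ultrametric space $(X,d)$ is $1$-monotone, i.e. there exists a linear order $<$ on $X$ such that $\operatorname{diam}(\{x\in X: a\le x\le b\})\le d(a,b)$ for all $a,b\in X$.
   Context: An ultrametric space is a metric space $(X,d)$ satisfying $d(x,y)\le\max(d(x,z),d(y,z))$ for all $x,y,z\in X$. A metric space is $C$-monotone if there is a linear order $<$ on it with $\operatorname{diam}([a,b])\le C\,d(a,b)$ for all $a,b$, where $[a,b]=\{x: a\le x\le b\}$. *)

theory Defs
  imports "HOL-Analysis.Analysis"
begin

end

theory Submission
  imports Defs
begin

(*
  Every ultrametric space is 1-monotone.

  Fix an arbitrary linear order W on X (e.g. a well-order).  In an ultrametric
  space two open balls of the same radius are either equal or disjoint, and two
  distinct points x, y lie in different open balls of radius dist x y.  Choosing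
  a centre in every ball, we put x before y iff the centre of the ball of radius
  dist x y around x precedes, in W, the centre of the ball of the same radius
  around y.  The isosceles property of ultrametric triangles makes this relation
  a linear order, and if x lies between a and b then dist a x <= dist a b;
  the ultrametric inequality then bounds the diameter of the interval [a,b]
  by dist a b.
*)

definition ultrametric_on :: "'a::metric_space set \<Rightarrow> bool" where
  "ultrametric_on X \<longleftrightarrow> (\<forall>x\<in>X. \<forall>y\<in>X. \<forall>z\<in>X. dist x y \<le> max (dist x z) (dist y z))"

lemma ultrametricD:
  "\<lbrakk>ultrametric_on X; x \<in> X; y \<in> X; z \<in> X\<rbrakk> \<Longrightarrow> dist x y \<le> max (dist x z) (dist y z)"
  unfolding ultrametric_on_def by blast

lemma ultrametric_isosceles:
  assumes "ultrametric_on X" "x \<in> X" "y \<in> X" "z \<in> X"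
  obtains "dist x y = dist y z" "dist y z = dist x z"
        | "dist x y < dist y z" "dist y z = dist x z"
        | "dist y z < dist x y" "dist x y = dist x z"
        | "dist x z < dist x y" "dist x y = dist y z"
proof -
  have "dist x y \<le> max (dist y z) (dist x z)"
       "dist y z \<le> max (dist x y) (dist x z)"
       "dist x z \<le> max (dist x y) (dist y z)"
    using ultrametricD[OF assms(1)] assms(2-4) by (metis dist_commute)+
  then show ?thesis using that by linarith
qed

text \<open>A chosen point of X in the ball of radius t around u; by the next lemma it
  depends only on the ball, not on u.\<close>

definition centre :: "'a::metric_space set \<Rightarrow> real \<Rightarrow> 'a \<Rightarrow> 'a" where
  "centre X t u = (SOME v. v \<in> X \<inter> ball u t)"

lemma centre_mem: "\<lbrakk>u \<in> X; 0 < t\<rbrakk> \<Longrightarrow> centre X t u \<in> X \<inter> ball u t"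
  unfolding centre_def by (rule someI[of _ u]) simp

text \<open>Every point of an ultrametric ball is a centre of it, so two balls of
  radius t whose centres are closer than t coincide.\<close>

lemma ultrametric_ball_eq:
  assumes U: "ultrametric_on X" and "x \<in> X" "z \<in> X" "dist x z < t"
  shows "X \<inter> ball x t = X \<inter> ball z t"
proof -
  have sub: "X \<inter> ball u t \<subseteq> X \<inter> ball v t"
    if "u \<in> X" "v \<in> X" "dist u v < t" for u v
  proof
    fix w assume "w \<in> X \<inter> ball u t"
    then have "w \<in> X" "dist u w < t" by auto
    then have "dist v w \<le> max (dist v u) (dist w u)" "dist w u < t"
      using ultrametricD[OF U, of v w u] that by (auto simp: dist_commute)
    then show "w \<in> X \<inter> ball v t"
      using \<open>w \<in> X\<close> that(3) by (auto simp: dist_commute)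
  qed
  show ?thesis
    using sub[of x z] sub[of z x] assms(2-4) by (auto simp: dist_commute)
qed

lemma centre_eq:
  "\<lbrakk>ultrametric_on X; x \<in> X; z \<in> X; dist x z < t\<rbrakk> \<Longrightarrow> centre X t x = centre X t z"
  unfolding centre_def by (simp add: ultrametric_ball_eq)

text \<open>Points at distance t lie in disjoint balls of radius t, so their centres differ.\<close>

lemma centre_neq:
  assumes U: "ultrametric_on X" and "x \<in> X" "y \<in> X" "x \<noteq> y"
  shows "centre X (dist x y) x \<noteq> centre X (dist x y) y"
proof
  let ?t = "dist x y"
  assume same: "centre X ?t x = centre X ?t y"
  have pos: "0 < ?t" using \<open>x \<noteq> y\<close> by simp
  have "centre X ?t x \<in> X \<inter> ball x ?t \<inter> ball y ?t"
    using centre_mem[OF assms(2) pos] centre_mem[OF assms(3) pos] same by simp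
  then obtain w where "w \<in> X" "dist x w < ?t" "dist y w < ?t" by auto
  then show False using ultrametricD[OF U, of x y w] assms(2,3) by auto
qed

definition ball_order :: "'a::metric_space set \<Rightarrow> 'a rel \<Rightarrow> 'a rel" where
  "ball_order X W = {(x, y). x \<in> X \<and> y \<in> X \<and>
     (x = y \<or> (centre X (dist x y) x, centre X (dist x y) y) \<in> W)}"

lemma ball_order_trans:
  assumes U: "ultrametric_on X" and W: "linear_order_on X W"
  shows "trans (ball_order X W)"
proof (rule transI)
  fix x y z assume xy: "(x, y) \<in> ball_order X W" and yz: "(y, z) \<in> ball_order X W"
  have X: "x \<in> X" "y \<in> X" "z \<in> X" using xy yz by (auto simp: ball_order_def)
  have Wtrans: "trans W" and Wanti: "antisym W"
    using W by (auto simp: linear_order_on_def partial_order_on_def preorder_on_def)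
  show "(x, z) \<in> ball_order X W"
  proof (cases "x = y \<or> y = z \<or> x = z")
    case True
    then show ?thesis using xy yz X by (auto simp: ball_order_def)
  next
    case False
    let ?c = "\<lambda>u. centre X (dist x z) u"
    have W_xy: "(centre X (dist x y) x, centre X (dist x y) y) \<in> W"
      and W_yz: "(centre X (dist y z) y, centre X (dist y z) z) \<in> W"
      using xy yz False by (auto simp: ball_order_def)
    have "(?c x, ?c z) \<in> W"
      using U X
    proof (cases rule: ultrametric_isosceles)
      case 1
      then show ?thesis using W_xy W_yz Wtrans by (metis transD)
    next
      case 2
      then show ?thesis using W_yz centre_eq[OF U X(1,2), of "dist x z"] by simp
    next
      case 3
      then show ?thesis using W_xy centre_eq[OF U X(2,3), of "dist x z"] by simp
    next
      case 4
      then have "centre X (dist x y) x = centre X (dist x y) z"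
        using centre_eq[OF U X(1,3)] by simp
      then have "centre X (dist x y) x = centre X (dist x y) y"
        using W_xy W_yz 4 Wanti by (metis antisymD)
      then show ?thesis using centre_neq[OF U X(1,2)] False by simp
    qed
    then show ?thesis using X by (auto simp: ball_order_def)
  qed
qed

lemma ball_order_linear:
  assumes U: "ultrametric_on X" and W: "linear_order_on X W"
  shows "linear_order_on X (ball_order X W)"
  unfolding linear_order_on_def partial_order_on_def preorder_on_def
proof (intro conjI)
  have Wanti: "antisym W" and Wtotal: "total_on X W"
    using W by (auto simp: linear_order_on_def partial_order_on_def)
  show "ball_order X W \<subseteq> X \<times> X" "refl_on X (ball_order X W)"
    by (auto simp: ball_order_def refl_on_def)
  show "trans (ball_order X W)" using ball_order_trans[OF U W] .
  show "antisym (ball_order X W)"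
  proof (rule antisymI, rule ccontr)
    fix x y assume "(x, y) \<in> ball_order X W" "(y, x) \<in> ball_order X W" "x \<noteq> y"
    then show False
      using centre_neq[OF U, of x y] Wanti
      by (auto simp: ball_order_def dist_commute dest: antisymD)
  qed
  show "total_on X (ball_order X W)"
  proof (rule total_onI)
    fix x y assume xy: "x \<in> X" "y \<in> X" "x \<noteq> y"
    then have pos: "0 < dist x y" by simp
    have "centre X (dist x y) x \<in> X" "centre X (dist x y) y \<in> X"
      using centre_mem[OF xy(1) pos] centre_mem[OF xy(2) pos] by auto
    then show "(x, y) \<in> ball_order X W \<or> (y, x) \<in> ball_order X W"
      using Wtotal centre_neq[OF U xy] xy
      by (auto simp: ball_order_def dist_commute total_on_def)
  qed
qed

lemma ball_order_interval_dist:
  assumes U: "ultrametric_on X" and W: "linear_order_on X W"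
    and ax: "(a, x) \<in> ball_order X W" and xb: "(x, b) \<in> ball_order X W"
  shows "dist a x \<le> dist a b"
proof (rule ccontr)
  let ?t = "dist a x"
  assume "\<not> dist a x \<le> dist a b"
  then have far: "dist a b < ?t" by simp
  have X: "a \<in> X" "x \<in> X" "b \<in> X" using ax xb by (auto simp: ball_order_def)
  have "a \<noteq> x" "x \<noteq> b" using far by auto
  have "dist x b = ?t"
    using U X(1,2,3) far by (cases rule: ultrametric_isosceles) (auto simp: dist_commute)
  then have "(centre X ?t a, centre X ?t x) \<in> W" "(centre X ?t x, centre X ?t b) \<in> W"
    using ax xb \<open>a \<noteq> x\<close> \<open>x \<noteq> b\<close> by (auto simp: ball_order_def)
  moreover have "centre X ?t b = centre X ?t a" using centre_eq[OF U X(1,3) far] by simp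
  moreover have "antisym W" using W by (auto simp: linear_order_on_def partial_order_on_def)
  ultimately have "centre X ?t a = centre X ?t x" by (metis antisymD)
  then show False using centre_neq[OF U X(1,2) \<open>a \<noteq> x\<close>] by simp
qed

text \<open>A metric-space version of the library's diameter bound for normed spaces.\<close>

lemma diameter_le_metric:
  fixes S :: "'a::metric_space set"
  assumes "0 \<le> r" and "\<And>x y. \<lbrakk>x \<in> S; y \<in> S\<rbrakk> \<Longrightarrow> dist x y \<le> r"
  shows "diameter S \<le> r"
  using assms by (auto simp: diameter_def intro: cSUP_least)

lemma ultrametric_diameter_le:
  assumes U: "ultrametric_on X" and "S \<subseteq> X" "a \<in> X" "0 \<le> r"
    and near: "\<And>x. x \<in> S \<Longrightarrow> dist a x \<le> r"
  shows "diameter S \<le> r"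
proof (rule diameter_le_metric[OF \<open>0 \<le> r\<close>])
  fix x y assume "x \<in> S" "y \<in> S"
  then have "dist x y \<le> max (dist x a) (dist y a)"
    using ultrametricD[OF U, of x y a] assms(2,3) by auto
  then show "dist x y \<le> r"
    using near[OF \<open>x \<in> S\<close>] near[OF \<open>y \<in> S\<close>] by (simp add: dist_commute)
qed

theorem lemma2p3:
  fixes X :: "'a::metric_space set"
  assumes "compact X"
    and "\<forall>x\<in>X. \<forall>y\<in>X. \<forall>z\<in>X. dist x y \<le> max (dist x z) (dist y z)"
  shows "\<exists>r. linear_order_on X r \<and>
           (\<forall>a\<in>X. \<forall>b\<in>X. diameter {x\<in>X. (a, x) \<in> r \<and> (x, b) \<in> r} \<le> dist a b)"
proof -
  have U: "ultrametric_on X" using assms(2) by (simp add: ultrametric_on_def)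
  obtain W where "well_order_on X W" using well_order_on by blast
  then have W: "linear_order_on X W" by (simp add: well_order_on_def)
  let ?r = "ball_order X W"
  have "diameter {x\<in>X. (a, x) \<in> ?r \<and> (x, b) \<in> ?r} \<le> dist a b"
    if "a \<in> X" "b \<in> X" for a b
    by (rule ultrametric_diameter_le[OF U _ \<open>a \<in> X\<close> zero_le_dist])
       (auto intro: ball_order_interval_dist[OF U W])
  then show ?thesis using ball_order_linear[OF U W] by blast
qed

end
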